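(* Let $B \in \mathbb{R}^{r \times n}$ and $S \subseteq \mathbb{R}^n$, and let $\varphi_B \colon \mathbb{R}^n_+ \to \mathbb{R}^r_+$, $\varphi_B(x) = x^B$. The following are equivalent: (i) $\varphi_B$ is injective with respect to $S$; (ii) $\sigma(\ker(B)) \cap \sigma(S^* ) = \emptyset$.
   Context: $\mathbb{R}_+$ denotes the strictly positive reals. For $x\in\mathbb{R}^n_+$, $(x^B)_j=\prod_{i=1}^n x_i^{b_{ji}}$ (real exponents). A function $g$ on $\mathbb{R}^n_+$ is injective with respect to $S$ if $x,y\in\mathbb{R}^n_+$, $x\ne y$, $x-y\in S$ imply $g(x)\neq g(y)$. $S^*=S\setminus\{0\}$. $\sigma$ denotes the componentwise sign vector, and $\sigma(T)=\{\sigma(x)\mid x\in T\}$. *)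

theory Defs
  imports "HOL-Analysis.Analysis"
begin

definition pos_orthant :: "(real^'n) set" where
  "pos_orthant = {x. \<forall>i. x $ i > 0}"

definition monomial_map :: "real^'n^'r \<Rightarrow> real^'n \<Rightarrow> real^'r" where
  "monomial_map B x = (\<chi> j. \<Prod>i\<in>UNIV. (x $ i) powr (B $ j $ i))"

definition injective_wrt :: "(real^'n \<Rightarrow> 'b) \<Rightarrow> (real^'n) set \<Rightarrow> bool" where
  "injective_wrt g S \<longleftrightarrow>
     (\<forall>x\<in>pos_orthant. \<forall>y\<in>pos_orthant. x \<noteq> y \<longrightarrow> x - y \<in> S \<longrightarrow> g x \<noteq> g y)"

definition sign_vec :: "real^'n \<Rightarrow> real^'n" where
  "sign_vec x = (\<chi> i. sgn (x $ i))"

definition mat_ker :: "real^'n^'r \<Rightarrow> (real^'n) set" where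
  "mat_ker B = {v. B *v v = 0}"

end

theory Submission
  imports Defs
begin

text \<open>Taking logarithms turns \<open>\<phi>\<^sub>B\<close> into the linear map \<open>B\<close>, so \<open>\<phi>\<^sub>B x = \<phi>\<^sub>B y\<close> iff
  \<open>ln x - ln y \<in> ker B\<close>; and since \<open>ln\<close> is strictly increasing, \<open>ln x - ln y\<close> has the sign pattern
  of \<open>x - y\<close>. Conversely, every pair \<open>(s, v)\<close> of equal sign pattern arises as \<open>(x - y, ln x - ln y)\<close>
  for positive \<open>x, y\<close>: coordinatewise take \<open>y = s / (e\<^sup>v - 1)\<close> and \<open>x = y e\<^sup>v\<close>.\<close>

definition ln_vec :: "real^'n \<Rightarrow> real^'n" where
  "ln_vec x = (\<chi> i. ln (x $ i))"

lemma monomial_map_pos: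
  assumes "x \<in> pos_orthant"
  shows "monomial_map B x $ j > 0"
  using assms unfolding monomial_map_def pos_orthant_def
  by (simp, intro prod_pos ballI, simp add: order.strict_iff_order[symmetric] powr_gt_zero)
     (metis less_irrefl)

lemma ln_monomial_map:
  assumes "x \<in> pos_orthant"
  shows "ln (monomial_map B x $ j) = (B *v ln_vec x) $ j"
proof -
  have pos: "\<And>i. x $ i > 0" using assms by (simp add: pos_orthant_def)
  have "ln (monomial_map B x $ j) = (\<Sum>i\<in>UNIV. ln ((x $ i) powr (B $ j $ i)))"
    using pos unfolding monomial_map_def by (simp, subst ln_prod) (auto, metis less_irrefl)
  also have "\<dots> = (\<Sum>i\<in>UNIV. B $ j $ i * ln (x $ i))"
    using pos by (simp add: ln_powr)
  finally show ?thesis by (simp add: matrix_vector_mult_def ln_vec_def)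
qed

lemma monomial_map_eq_iff:
  assumes "x \<in> pos_orthant" "y \<in> pos_orthant"
  shows "monomial_map B x = monomial_map B y \<longleftrightarrow> ln_vec x - ln_vec y \<in> mat_ker B"
proof -
  have "monomial_map B x = monomial_map B y \<longleftrightarrow>
        (\<forall>j. ln (monomial_map B x $ j) = ln (monomial_map B y $ j))"
    using monomial_map_pos[OF assms(1)] monomial_map_pos[OF assms(2)]
    by (metis vec_eq_iff ln_inj_iff)
  also have "\<dots> \<longleftrightarrow> B *v (ln_vec x - ln_vec y) = 0"
    by (simp add: ln_monomial_map assms matrix_vector_mult_diff_distrib vec_eq_iff)
  finally show ?thesis by (simp add: mat_ker_def)
qed

lemma sgn_ln_diff:
  fixes a b :: real
  assumes "a > 0" "b > 0"
  shows "sgn (ln a - ln b) = sgn (a - b)"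
  using assms by (cases a b rule: linorder_cases) (auto simp: sgn_if)

lemma sign_vec_ln_vec_diff:
  assumes "x \<in> pos_orthant" "y \<in> pos_orthant"
  shows "sign_vec (ln_vec x - ln_vec y) = sign_vec (x - y)"
  using assms by (simp add: sign_vec_def vec_eq_iff ln_vec_def pos_orthant_def sgn_ln_diff)

lemma sgn_exp_minus_one: "sgn (exp b - 1) = sgn (b::real)"
  by (cases b "0::real" rule: linorder_cases) (auto simp: sgn_if)

lemma exists_pos_diff_ln_diff:
  fixes a b :: real
  assumes "sgn a = sgn b"
  shows "\<exists>p q. p > 0 \<and> q > 0 \<and> p - q = a \<and> ln p - ln q = b"
proof (cases "a = 0")
  case True
  with assms have "b = 0" by (simp add: sgn_0_0)
  with True show ?thesis by (intro exI[of _ 1]) simp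
next
  case False
  define q where "q = a / (exp b - 1)"
  have "sgn (exp b - 1) = sgn a" using assms by (simp add: sgn_exp_minus_one)
  then have e: "exp b - 1 \<noteq> 0" and "sgn q = 1"
    using False by (auto simp: q_def sgn_divide sgn_0_0)
  then have q: "q > 0" by (simp add: sgn_1_pos)
  have "q * exp b - q = q * (exp b - 1)" by (simp add: algebra_simps)
  also have "\<dots> = a" using e by (simp add: q_def)
  finally have "q * exp b - q = a" .
  moreover have "ln (q * exp b) - ln q = b" using q by (simp add: ln_mult)
  ultimately show ?thesis using q by (intro exI[of _ "q * exp b"] exI[of _ q]) simp
qed

lemma exists_pos_orthant_diff_ln_vec_diff:
  assumes "sign_vec v = sign_vec s"
  obtains x y where "x \<in> pos_orthant" "y \<in> pos_orthant" "x - y = s" "ln_vec x - ln_vec y = v"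
proof -
  have "\<forall>i. \<exists>p q. p > 0 \<and> q > 0 \<and> p - q = s $ i \<and> ln p - ln q = v $ i"
    using assms by (intro allI exists_pos_diff_ln_diff) (simp add: sign_vec_def vec_eq_iff)
  then obtain p q where "\<And>i. p i > 0 \<and> q i > 0 \<and> p i - q i = s $ i \<and> ln (p i) - ln (q i) = v $ i"
    by metis
  then show ?thesis
    by (intro that[of "\<chi> i. p i" "\<chi> i. q i"])
       (simp_all add: pos_orthant_def ln_vec_def vec_eq_iff)
qed

theorem mainTheorem7:
  fixes B :: "real^'n^'r" and S :: "(real^'n) set"
  shows "injective_wrt (monomial_map B) S \<longleftrightarrow>
         sign_vec ` (mat_ker B) \<inter> sign_vec ` (S - {0}) = {}"
proof
  assume inj: "injective_wrt (monomial_map B) S"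
  show "sign_vec ` (mat_ker B) \<inter> sign_vec ` (S - {0}) = {}"
  proof (rule ccontr)
    assume "\<not> ?thesis"
    then obtain v s where v: "v \<in> mat_ker B" and s: "s \<in> S - {0}"
      and sv: "sign_vec v = sign_vec s" by auto
    from sv obtain x y where "x \<in> pos_orthant" "y \<in> pos_orthant" "x - y = s" "ln_vec x - ln_vec y = v"
      by (rule exists_pos_orthant_diff_ln_vec_diff)
    with v s inj show False by (auto simp: injective_wrt_def monomial_map_eq_iff)
  qed
next
  assume disj: "sign_vec ` (mat_ker B) \<inter> sign_vec ` (S - {0}) = {}"
  show "injective_wrt (monomial_map B) S"
    unfolding injective_wrt_def
  proof (intro ballI impI notI)
    fix x y assume x: "x \<in> pos_orthant" and y: "y \<in> pos_orthant" and "x \<noteq> y" "x - y \<in> S"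
      and "monomial_map B x = monomial_map B y"
    then have "ln_vec x - ln_vec y \<in> mat_ker B" and "x - y \<in> S - {0}"
      by (simp_all add: monomial_map_eq_iff)
    with disj sign_vec_ln_vec_diff[OF x y] show False by blast
  qed
qed

end
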